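(* Let $\mathbf{X}=\{\mathbf{X}_n\}_{n\ge0}$ be a process in $\mathbb{R}^p$, $p\ge1$, with $E\|\mathbf{X}_n\|^2<\infty$ for all $n$, adapted to a filtration $\{\mathcal{F}_n\}_{n\ge0}$. (i) If (A5), (A7), (A8) hold, then $\lim_n\|\mathbf{X}_n\|$ exists and is finite a.e. (ii) If (A6), (A7), (A8) hold, then $\lim_n\|\mathbf{X}_n\|=0$ a.e.
   Context: $\|\cdot\|$ is the Euclidean norm. Residual vectors: $\boldsymbol{\epsilon}_n=\mathbf{X}_n-E[\mathbf{X}_n\mid\mathcal{F}_{n-1}]$, $n\ge1$, with components $\boldsymbol{\epsilon}_n(t)$, $t\in\{1,\dots,p\}$. (A5) There are constants $\alpha_n\ge0$ with $\sum_n\alpha_n<\infty$ such that a.e., for all $n\ge1$: $\frac{\|E[\mathbf{X}_n\mid\mathcal{F}_{n-1}]\|}{\|\mathbf{X}_{n-1}\|}I\{\|\mathbf{X}_{n-1}\|\ne0\}\le1+\alpha_n$. (A6) There are constants $0<k_n\le1$ with $\sum_n(1-k_n)=\infty$ such that a.e., for all $n\ge1$: $\frac{\|E[\mathbf{X}_n\mid\mathcal{F}_{n-1}]\|}{\|\mathbf{X}_{n-1}\|}I\{\|\mathbf{X}_{n-1}\|\ne0\}\le k_n$. (A7) $\lim_n E[\mathbf{X}_n\mid\mathcal{F}_{n-1}]\,I\{\mathbf{X}_{n-1}=\mathbf{0}\}=\mathbf{0}$ a.e. (A8) There are constants $v_n\ge0$ with $\sum_n v_n<\infty$ such that $\max_{1\le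 t\le p}\mathrm{Var}(\boldsymbol{\epsilon}_n(t)\mid\mathcal{F}_{n-1})\le v_n$ a.e. for all $n\ge1$. *)

theory Defs
  imports "HOL-Probability.Probability"
begin

definition vcond_exp :: "'a measure \<Rightarrow> 'a measure \<Rightarrow> ('a \<Rightarrow> real ^ 'p) \<Rightarrow> 'a \<Rightarrow> real ^ 'p" where
  "vcond_exp M F Y = (\<lambda>\<omega>. \<chi> t. real_cond_exp M F (\<lambda>x. Y x $ t) \<omega>)"

definition cond_var :: "'a measure \<Rightarrow> 'a measure \<Rightarrow> ('a \<Rightarrow> real) \<Rightarrow> 'a \<Rightarrow> real" where
  "cond_var M F Y = real_cond_exp M F (\<lambda>x. (Y x - real_cond_exp M F Y x)\<^sup>2)"

definition resid :: "'a measure \<Rightarrow> (nat \<Rightarrow> 'a measure) \<Rightarrow> (nat \<Rightarrow> 'a \<Rightarrow> real ^ 'p) \<Rightarrow> nat \<Rightarrow> 'a \<Rightarrow> real ^ 'p" where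
  "resid M F X n = (\<lambda>\<omega>. X n \<omega> - vcond_exp M (F (n - 1)) (X n) \<omega>)"

definition A5 :: "'a measure \<Rightarrow> (nat \<Rightarrow> 'a measure) \<Rightarrow> (nat \<Rightarrow> 'a \<Rightarrow> real ^ 'p) \<Rightarrow> bool" where
  "A5 M F X \<longleftrightarrow> (\<exists>\<alpha>::nat \<Rightarrow> real. (\<forall>n. \<alpha> n \<ge> 0) \<and> summable \<alpha> \<and>
     (AE \<omega> in M. \<forall>n\<ge>1. X (n - 1) \<omega> \<noteq> 0 \<longrightarrow>
        norm (vcond_exp M (F (n - 1)) (X n) \<omega>) / norm (X (n - 1) \<omega>) \<le> 1 + \<alpha> n))"

definition A6 :: "'a measure \<Rightarrow> (nat \<Rightarrow> 'a measure) \<Rightarrow> (nat \<Rightarrow> 'a \<Rightarrow> real ^ 'p) \<Rightarrow> bool" where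
  "A6 M F X \<longleftrightarrow> (\<exists>k::nat \<Rightarrow> real. (\<forall>n. 0 < k n \<and> k n \<le> 1) \<and> \<not> summable (\<lambda>n. 1 - k n) \<and>
     (AE \<omega> in M. \<forall>n\<ge>1. X (n - 1) \<omega> \<noteq> 0 \<longrightarrow>
        norm (vcond_exp M (F (n - 1)) (X n) \<omega>) / norm (X (n - 1) \<omega>) \<le> k n))"

definition A7 :: "'a measure \<Rightarrow> (nat \<Rightarrow> 'a measure) \<Rightarrow> (nat \<Rightarrow> 'a \<Rightarrow> real ^ 'p) \<Rightarrow> bool" where
  "A7 M F X \<longleftrightarrow> (AE \<omega> in M.
     (\<lambda>n. if X (n - 1) \<omega> = 0 then vcond_exp M (F (n - 1)) (X n) \<omega> else 0) \<longlonglongrightarrow> 0)"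

definition A8 :: "'a measure \<Rightarrow> (nat \<Rightarrow> 'a measure) \<Rightarrow> (nat \<Rightarrow> 'a \<Rightarrow> real ^ 'p) \<Rightarrow> bool" where
  "A8 M F X \<longleftrightarrow> (\<exists>v::nat \<Rightarrow> real. (\<forall>n. v n \<ge> 0) \<and> summable v \<and>
     (AE \<omega> in M. \<forall>n\<ge>1. \<forall>t. cond_var M (F (n - 1)) (\<lambda>x. resid M F X n x $ t) \<omega> \<le> v n))"

end

theory Submission
  imports Defs
begin

text \<open>Write \<open>X (n + 1) = m n + \<epsilon> (n + 1)\<close> with \<open>m n = E[X (n + 1) | F n]\<close> and consider the potential
  \<open>ln (1 + \<parallel>X n\<parallel>\<^sup>2)\<close>. When \<open>X n \<noteq> 0\<close> and \<open>\<parallel>m n\<parallel> \<le> \<beta> (n + 1) \<parallel>X n\<parallel>\<close>, its increment is at most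
  \<open>(\<beta>\<^sup>2 - 1) w n + 2 \<langle>m n / (1 + \<parallel>X n\<parallel>\<^sup>2), \<epsilon> (n + 1)\<rangle> + \<parallel>\<epsilon> (n + 1)\<parallel>\<^sup>2\<close> with \<open>w n \<in> [0, 1]\<close>; when
  \<open>X n = 0\<close> the potential drops below \<open>2 \<parallel>m n\<parallel>\<^sup>2 + 2 \<parallel>\<epsilon> (n + 1)\<parallel>\<^sup>2\<close>, which tends to \<open>0\<close> by (A7).
  By (A8) the residuals have summable second moments, so \<open>\<Sum> \<parallel>\<epsilon> n\<parallel>\<^sup>2\<close> converges almost surely, and the cross
  terms are a martingale transform with bounded predictable coefficients, which converges almost surely by
  Kolmogorov's maximal inequality. Pathwise, a nonnegative sequence with summable increments between
  resets, each reset landing below a null sequence, converges; under (A5) this gives (i). Under (A6) the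
  increments carry the additional drift \<open>-(1 - k) w n\<close>, and \<open>\<Sum> (1 - k n) = \<infinity>\<close> rules out a positive
  limit, giving (ii).\<close>

lemma integrable_square_add:
  fixes f g :: "'a \<Rightarrow> real"
  assumes "f \<in> borel_measurable M" "g \<in> borel_measurable M"
    "integrable M (\<lambda>x. (f x)\<^sup>2)" "integrable M (\<lambda>x. (g x)\<^sup>2)"
  shows "integrable M (\<lambda>x. (f x + g x)\<^sup>2)"
proof (rule Bochner_Integration.integrable_bound[of _ "\<lambda>x. 2 * (f x)\<^sup>2 + 2 * (g x)\<^sup>2"])
  have "(f x + g x)\<^sup>2 \<le> 2 * (f x)\<^sup>2 + 2 * (g x)\<^sup>2" for x
    using zero_le_power2[of "f x - g x"] unfolding power2_diff power2_sum by linarith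
  then show "AE x in M. norm ((f x + g x)\<^sup>2) \<le> norm (2 * (f x)\<^sup>2 + 2 * (g x)\<^sup>2)"
    by simp
qed (use assms in auto)

lemma integrable_mult_of_square_integrable:
  fixes f g :: "'a \<Rightarrow> real"
  assumes "f \<in> borel_measurable M" "g \<in> borel_measurable M"
    "integrable M (\<lambda>x. (f x)\<^sup>2)" "integrable M (\<lambda>x. (g x)\<^sup>2)"
  shows "integrable M (\<lambda>x. f x * g x)"
proof (rule Bochner_Integration.integrable_bound[of _ "\<lambda>x. (f x)\<^sup>2 + (g x)\<^sup>2"])
  have "\<bar>f x * g x\<bar> \<le> (f x)\<^sup>2 + (g x)\<^sup>2" for x
    using zero_le_power2[of "f x - g x"] zero_le_power2[of "f x + g x"]
    unfolding power2_diff power2_sum abs_le_iff by linarith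
  then show "AE x in M. norm (f x * g x) \<le> norm ((f x)\<^sup>2 + (g x)\<^sup>2)"
    by simp
qed (use assms in auto)

lemma (in finite_measure) integrable_of_square_integrable:
  fixes f :: "'a \<Rightarrow> real"
  assumes "f \<in> borel_measurable M" "integrable M (\<lambda>x. (f x)\<^sup>2)"
  shows "integrable M f"
proof (rule Bochner_Integration.integrable_bound[of _ "\<lambda>x. 1 + (f x)\<^sup>2"])
  have "\<bar>f x\<bar> \<le> 1 + (f x)\<^sup>2" for x
    using zero_le_power2[of "\<bar>f x\<bar> - 1"] unfolding power2_diff power2_abs by simp
  then show "AE x in M. norm (f x) \<le> norm (1 + (f x)\<^sup>2)" by simp
qed (use assms in auto)

lemma integrable_square_bounded_mult:
  fixes f c :: "'a \<Rightarrow> real"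
  assumes "f \<in> borel_measurable M" "c \<in> borel_measurable M"
    "integrable M (\<lambda>x. (f x)\<^sup>2)" "\<And>x. \<bar>c x\<bar> \<le> B"
  shows "integrable M (\<lambda>x. (c x * f x)\<^sup>2)"
proof (rule Bochner_Integration.integrable_bound[of _ "\<lambda>x. B\<^sup>2 * (f x)\<^sup>2"])
  have "(c x * f x)\<^sup>2 \<le> B\<^sup>2 * (f x)\<^sup>2" for x
  proof -
    have "(c x)\<^sup>2 \<le> B\<^sup>2" using assms(4)[of x] by (metis abs_ge_zero power2_abs power_mono)
    then show ?thesis unfolding power_mult_distrib by (rule mult_right_mono) simp
  qed
  then show "AE x in M. norm ((c x * f x)\<^sup>2) \<le> norm (B\<^sup>2 * (f x)\<^sup>2)" by simp
qed (use assms in auto)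

section \<open>Orthogonal increments and Kolmogorov's maximal inequality\<close>

lemma summable_if_eventually_small_partial_sums:
  fixes a :: "nat \<Rightarrow> real"
  assumes small: "\<And>q. \<exists>m. \<forall>i\<ge>m. \<bar>\<Sum>k\<in>{m..<i}. a k\<bar> < 1 / real (Suc q)"
  shows "summable a"
  unfolding summable_Cauchy
proof (intro allI impI)
  fix e :: real assume "e > 0"
  then obtain q where q: "1 / real (Suc q) < e / 2"
    by (metis half_gt_zero nat_approx_posE)
  obtain m where m: "\<forall>i\<ge>m. \<bar>\<Sum>k\<in>{m..<i}. a k\<bar> < 1 / real (Suc q)" using small by blast
  show "\<exists>N. \<forall>m'\<ge>N. \<forall>n. norm (sum a {m'..<n}) < e"
  proof (intro exI allI impI)
    fix m' n assume "m \<le> m'"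
    show "norm (sum a {m'..<n}) < e"
    proof (cases "m' \<le> n")
      case True
      then have "sum a {m'..<n} = sum a {m..<n} - sum a {m..<m'}"
        using sum.atLeastLessThan_concat[of m m' n a] \<open>m \<le> m'\<close> by simp
      moreover have "\<bar>sum a {m..<n}\<bar> < 1 / real (Suc q)" "\<bar>sum a {m..<m'}\<bar> < 1 / real (Suc q)"
        using m True \<open>m \<le> m'\<close> by auto
      ultimately show ?thesis using q by simp
    qed (use \<open>e > 0\<close> in simp)
  qed
qed

locale filtered_prob_space = prob_space +
  fixes F :: "nat \<Rightarrow> 'a measure"
  assumes subalgebra_filtration: "\<And>n. subalgebra M (F n)"
    and filtration_mono: "\<And>m n. m \<le> n \<Longrightarrow> sets (F m) \<subseteq> sets (F n)"
begin

lemma measurable_filtration_mono: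
  assumes "f \<in> measurable (F m) N" "m \<le> n"
  shows "f \<in> measurable (F n) N"
  using measurable_mono[of N N "F m" "F n"] filtration_mono[OF assms(2)]
    subalgebra_filtration[of m] subalgebra_filtration[of n] assms(1)
  unfolding subalgebra_def by auto

lemma measurable_filtration_imp_measurable:
  "f \<in> measurable (F n) N \<Longrightarrow> f \<in> measurable M N"
  using measurable_from_subalg subalgebra_filtration by blast

lemma finite_measure_subalgebra_filtration: "finite_measure_subalgebra M (F n)"
  by (simp add: finite_measure_subalgebra_def finite_measure_subalgebra_axioms_def
      subalgebra_filtration finite_measure_axioms)

end

locale orthogonal_increments = filtered_prob_space +
  fixes \<eta> :: "nat \<Rightarrow> 'a \<Rightarrow> real"
  assumes increment_measurable: "\<And>n. \<eta> n \<in> borel_measurable (F (Suc n))"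
    and increment_square_integrable: "\<And>n. integrable M (\<lambda>x. (\<eta> n x)\<^sup>2)"
    and increment_orthogonal: \<comment> \<open>the \<open>L\<^sup>2\<close> form of \<open>E[\<eta> n | F n] = 0\<close>\<close>
      "\<And>n Z. Z \<in> borel_measurable (F n) \<Longrightarrow> integrable M (\<lambda>x. (Z x)\<^sup>2) \<Longrightarrow>
      (\<integral>x. Z x * \<eta> n x \<partial>M) = 0"
begin

lemma increment_measurable_M [measurable]: "\<eta> n \<in> borel_measurable M"
  by (rule measurable_filtration_imp_measurable[OF increment_measurable])

definition increment_sum :: "nat \<Rightarrow> nat \<Rightarrow> 'a \<Rightarrow> real" where
  "increment_sum m j x = (\<Sum>k\<in>{m..<j}. \<eta> k x)"

lemma increment_sum_measurable: "increment_sum m j \<in> borel_measurable (F j)"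
  unfolding increment_sum_def
  by (rule borel_measurable_sum) (auto intro: measurable_filtration_mono[OF increment_measurable])

lemma increment_sum_measurable_M [measurable]: "increment_sum m j \<in> borel_measurable M"
  by (rule measurable_filtration_imp_measurable[OF increment_sum_measurable])

lemma increment_sum_Suc: "m \<le> j \<Longrightarrow> increment_sum m (Suc j) x = increment_sum m j x + \<eta> j x"
  unfolding increment_sum_def by (simp add: atLeastLessThanSuc)

lemma increment_sum_empty: "j \<le> m \<Longrightarrow> increment_sum m j x = 0"
  unfolding increment_sum_def by simp

lemma increment_sum_square_integrable: "integrable M (\<lambda>x. (increment_sum m j x)\<^sup>2)"
proof (induction j)
  case (Suc j)
  show ?case
  proof (cases "m \<le> j")
    case True
    then show ?thesis
      using integrable_square_add[OF _ _ Suc increment_square_integrable] by (simp add: increment_sum_Suc)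
  qed (simp add: increment_sum_empty)
qed (simp add: increment_sum_empty)

lemma integral_increment_sum_square:
  assumes "m \<le> j"
  shows "(\<integral>x. (increment_sum m j x)\<^sup>2 \<partial>M) = (\<Sum>k\<in>{m..<j}. \<integral>x. (\<eta> k x)\<^sup>2 \<partial>M)"
  using assms
proof (induction j rule: dec_induct)
  case (step j)
  have cross: "integrable M (\<lambda>x. increment_sum m j x * \<eta> j x)"
    by (rule integrable_mult_of_square_integrable)
      (auto intro: increment_sum_square_integrable increment_square_integrable)
  have "(\<integral>x. (increment_sum m (Suc j) x)\<^sup>2 \<partial>M)
      = (\<integral>x. (increment_sum m j x)\<^sup>2 + 2 * (increment_sum m j x * \<eta> j x) + (\<eta> j x)\<^sup>2 \<partial>M)"
    by (rule Bochner_Integration.integral_cong) (simp_all add: increment_sum_Suc[OF step(1)] power2_sum)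
  also have "\<dots> = (\<integral>x. (increment_sum m j x)\<^sup>2 \<partial>M) + 2 * (\<integral>x. increment_sum m j x * \<eta> j x \<partial>M)
      + (\<integral>x. (\<eta> j x)\<^sup>2 \<partial>M)"
    using cross increment_sum_square_integrable increment_square_integrable by simp
  also have "(\<integral>x. increment_sum m j x * \<eta> j x \<partial>M) = 0"
    by (rule increment_orthogonal[OF increment_sum_measurable increment_sum_square_integrable])
  finally show ?case using step by (simp add: atLeastLessThanSuc)
qed (simp add: increment_sum_empty)

definition exceedance :: "real \<Rightarrow> nat \<Rightarrow> nat \<Rightarrow> 'a set" where
  "exceedance l m n = {x\<in>space M. \<exists>i\<in>{m..n}. l \<le> \<bar>increment_sum m i x\<bar>}"

lemma exceedance_in_filtration: "exceedance l m n \<in> sets (F n)"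
proof -
  have "exceedance l m n = (\<Union>i\<in>{m..n}. {x\<in>space (F n). l \<le> \<bar>increment_sum m i x\<bar>})"
    using subalgebra_filtration[of n] unfolding exceedance_def subalgebra_def by auto
  also have "\<dots> \<in> sets (F n)"
  proof (rule sets.finite_UN)
    fix i assume "i \<in> {m..n}"
    then have [measurable]: "increment_sum m i \<in> borel_measurable (F n)"
      using measurable_filtration_mono[OF increment_sum_measurable] by auto
    show "{x\<in>space (F n). l \<le> \<bar>increment_sum m i x\<bar>} \<in> sets (F n)" by measurable
  qed auto
  finally show ?thesis .
qed

lemma exceedance_in_sets [measurable]: "exceedance l m n \<in> sets M"
  using exceedance_in_filtration subalgebra_filtration unfolding subalgebra_def by blast

lemma integrable_exceedance_square:
  "integrable M (\<lambda>x. indicator (exceedance l m n) x * (increment_sum m n x)\<^sup>2)"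
  by (rule Bochner_Integration.integrable_bound[OF increment_sum_square_integrable[of m n]])
    (auto simp: indicator_def)

text \<open>A path first exceeding \<open>l\<close> at time \<open>n + 1\<close> contributes at least \<open>l\<^sup>2\<close>; one that exceeded
  before keeps its square up to a cross term which is orthogonal to the new increment.\<close>

lemma exceedance_Suc_pointwise:
  assumes "m \<le> n" "0 < l"
  defines "C \<equiv> {x\<in>space M. x \<notin> exceedance l m n \<and> l \<le> \<bar>increment_sum m (Suc n) x\<bar>}"
  shows "exceedance l m (Suc n) = exceedance l m n \<union> C"
    and "indicator (exceedance l m n) x * (increment_sum m n x)\<^sup>2
        + 2 * (indicator (exceedance l m n) x * increment_sum m n x * \<eta> n x) + l\<^sup>2 * indicator C x
      \<le> indicator (exceedance l m (Suc n)) x * (increment_sum m (Suc n) x)\<^sup>2"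
proof -
  show split: "exceedance l m (Suc n) = exceedance l m n \<union> C"
    unfolding exceedance_def C_def using assms(1) by (auto simp: le_Suc_eq)
  show "indicator (exceedance l m n) x * (increment_sum m n x)\<^sup>2
        + 2 * (indicator (exceedance l m n) x * increment_sum m n x * \<eta> n x) + l\<^sup>2 * indicator C x
      \<le> indicator (exceedance l m (Suc n)) x * (increment_sum m (Suc n) x)\<^sup>2"
  proof (cases "x \<in> exceedance l m n")
    case True
    then have "x \<notin> C" unfolding C_def by auto
    then show ?thesis
      using True unfolding split increment_sum_Suc[OF assms(1)] by (simp add: power2_sum)
  next
    case False
    moreover have "l\<^sup>2 \<le> (increment_sum m (Suc n) x)\<^sup>2" if "x \<in> C"
      using that assms(2) unfolding C_def by (metis (mono_tags) abs_ge_zero less_imp_le mem_Collect_eq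
          power2_abs power_mono)
    ultimately show ?thesis unfolding split by (auto simp: indicator_def)
  qed
qed

lemma exceedance_indicator_bound:
  assumes "m \<le> n" "0 < l"
  shows "l\<^sup>2 * prob (exceedance l m n) \<le> (\<integral>x. indicator (exceedance l m n) x * (increment_sum m n x)\<^sup>2 \<partial>M)"
  using assms(1)
proof (induction n rule: dec_induct)
  case base
  have "exceedance l m m = {}" using assms(2) unfolding exceedance_def by (auto simp: increment_sum_empty)
  then show ?case by simp
next
  case (step n)
  define C where "C = {x\<in>space M. x \<notin> exceedance l m n \<and> l \<le> \<bar>increment_sum m (Suc n) x\<bar>}"
  note split = exceedance_Suc_pointwise[OF step(1) assms(2), folded C_def]
  have C_sets [measurable]: "C \<in> sets M" unfolding C_def by measurable
  define Z where "Z x = indicator (exceedance l m n) x * increment_sum m n x" for x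
  have Z_F: "Z \<in> borel_measurable (F n)"
    unfolding Z_def using exceedance_in_filtration increment_sum_measurable by measurable
  have Z_sq: "integrable M (\<lambda>x. (Z x)\<^sup>2)"
    by (rule Bochner_Integration.integrable_bound[OF increment_sum_square_integrable[of m n]])
      (auto simp: Z_def indicator_def)
  have Z_cross: "integrable M (\<lambda>x. Z x * \<eta> n x)"
    by (rule integrable_mult_of_square_integrable[OF measurable_filtration_imp_measurable[OF Z_F] _ Z_sq
          increment_square_integrable]) simp
  have C_int: "integrable M (\<lambda>x. l\<^sup>2 * indicator C x)"
    by (intro integrable_mult_right integrable_real_indicator) (simp_all add: less_top[symmetric])
  have "l\<^sup>2 * prob (exceedance l m (Suc n)) = l\<^sup>2 * prob (exceedance l m n) + l\<^sup>2 * prob C"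
    unfolding split(1) by (subst finite_measure_Union) (auto simp: C_def algebra_simps)
  also have "\<dots> \<le> (\<integral>x. indicator (exceedance l m n) x * (increment_sum m n x)\<^sup>2 \<partial>M)
      + 2 * (\<integral>x. Z x * \<eta> n x \<partial>M) + (\<integral>x. l\<^sup>2 * indicator C x \<partial>M)"
    using step(3) increment_orthogonal[OF Z_F Z_sq] by simp
  also have "\<dots> = (\<integral>x. indicator (exceedance l m n) x * (increment_sum m n x)\<^sup>2
      + 2 * (Z x * \<eta> n x) + l\<^sup>2 * indicator C x \<partial>M)"
    using integrable_exceedance_square Z_cross C_int by simp
  also have "\<dots> \<le> (\<integral>x. indicator (exceedance l m (Suc n)) x * (increment_sum m (Suc n) x)\<^sup>2 \<partial>M)"
    by (rule integral_mono[OF _ integrable_exceedance_square])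
      (use integrable_exceedance_square Z_cross C_int split(2) in \<open>auto simp: Z_def mult.assoc\<close>)
  finally show ?case .
qed

theorem kolmogorov_maximal_inequality:
  assumes "m \<le> n" "0 < l"
  shows "l\<^sup>2 * prob (exceedance l m n) \<le> (\<Sum>k\<in>{m..<n}. \<integral>x. (\<eta> k x)\<^sup>2 \<partial>M)"
proof -
  have "l\<^sup>2 * prob (exceedance l m n) \<le> (\<integral>x. indicator (exceedance l m n) x * (increment_sum m n x)\<^sup>2 \<partial>M)"
    by (rule exceedance_indicator_bound[OF assms])
  also have "\<dots> \<le> (\<integral>x. (increment_sum m n x)\<^sup>2 \<partial>M)"
    by (rule integral_mono[OF integrable_exceedance_square increment_sum_square_integrable])
      (auto simp: indicator_def)
  finally show ?thesis using integral_increment_sum_square[OF assms(1)] by simp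
qed

lemma tail_exceedance_bound:
  assumes summable: "summable (\<lambda>n. \<integral>x. (\<eta> n x)\<^sup>2 \<partial>M)" and "0 < l"
  shows "l\<^sup>2 * prob {x\<in>space M. \<exists>i\<ge>m. l \<le> \<bar>increment_sum m i x\<bar>} \<le> (\<Sum>k. \<integral>x. (\<eta> (k + m) x)\<^sup>2 \<partial>M)"
proof -
  let ?e = "\<lambda>k. \<integral>x. (\<eta> k x)\<^sup>2 \<partial>M"
  have tail_eq: "{x\<in>space M. \<exists>i\<ge>m. l \<le> \<bar>increment_sum m i x\<bar>} = (\<Union>n. exceedance l m (n + m))"
  proof (intro equalityI subsetI)
    fix x assume "x \<in> {x\<in>space M. \<exists>i\<ge>m. l \<le> \<bar>increment_sum m i x\<bar>}"
    then obtain i where "x \<in> space M" "m \<le> i" "l \<le> \<bar>increment_sum m i x\<bar>" by auto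
    then show "x \<in> (\<Union>n. exceedance l m (n + m))"
      unfolding exceedance_def by (intro UN_I[of "i - m"]) auto
  qed (auto simp: exceedance_def)
  have "incseq (\<lambda>n. exceedance l m (n + m))" unfolding incseq_def exceedance_def by force
  then have lim: "(\<lambda>n. l\<^sup>2 * prob (exceedance l m (n + m))) \<longlonglongrightarrow> l\<^sup>2 * prob (\<Union>n. exceedance l m (n + m))"
    by (intro tendsto_mult_left finite_Lim_measure_incseq) auto
  have "l\<^sup>2 * prob (exceedance l m (n + m)) \<le> (\<Sum>k. ?e (k + m))" for n
  proof -
    have "l\<^sup>2 * prob (exceedance l m (n + m)) \<le> (\<Sum>k\<in>{m..<n + m}. ?e k)"
      by (rule kolmogorov_maximal_inequality) (use assms in auto)
    also have "\<dots> = (\<Sum>k<n. ?e (k + m))" using sum.shift_bounds_nat_ivl[of ?e 0 m n] by (simp add: atLeast0LessThan)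
    also have "\<dots> \<le> (\<Sum>k. ?e (k + m))"
      by (rule sum_le_suminf) (auto intro: integral_nonneg_AE summable_ignore_initial_segment[OF summable])
    finally show ?thesis .
  qed
  then show ?thesis unfolding tail_eq by (intro LIMSEQ_le_const2[OF lim]) auto
qed

theorem AE_summable_increments:
  assumes summable: "summable (\<lambda>n. \<integral>x. (\<eta> n x)\<^sup>2 \<partial>M)"
  shows "AE x in M. summable (\<lambda>n. \<eta> n x)"
proof -
  let ?tail = "\<lambda>m. \<Sum>k. \<integral>x. (\<eta> (k + m) x)\<^sup>2 \<partial>M"
  have tail_0: "?tail \<longlonglongrightarrow> 0"
  proof -
    have "(\<lambda>m. (\<Sum>n. \<integral>x. (\<eta> n x)\<^sup>2 \<partial>M) - (\<Sum>k<m. \<integral>x. (\<eta> k x)\<^sup>2 \<partial>M))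
        \<longlonglongrightarrow> (\<Sum>n. \<integral>x. (\<eta> n x)\<^sup>2 \<partial>M) - (\<Sum>n. \<integral>x. (\<eta> n x)\<^sup>2 \<partial>M)"
      by (intro tendsto_diff tendsto_const summable_LIMSEQ[OF summable])
    then show ?thesis by (simp add: suminf_minus_initial_segment[OF summable])
  qed
  have "AE x in M. \<exists>m. \<forall>i\<ge>m. \<bar>increment_sum m i x\<bar> < 1 / real (Suc q)" for q
  proof -
    define l where "l = 1 / real (Suc q)"
    have l: "0 < l" unfolding l_def by simp
    define N where "N = (\<Inter>m. {x\<in>space M. \<exists>i\<ge>m. l \<le> \<bar>increment_sum m i x\<bar>})"
    have N_sets: "N \<in> sets M" unfolding N_def by measurable
    have "prob N \<le> ?tail m / l\<^sup>2" for m
    proof -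
      have "prob N \<le> prob {x\<in>space M. \<exists>i\<ge>m. l \<le> \<bar>increment_sum m i x\<bar>}"
        unfolding N_def by (rule finite_measure_mono) auto
      also have "\<dots> \<le> ?tail m / l\<^sup>2"
        using tail_exceedance_bound[OF summable l, of m] l by (simp add: field_simps)
      finally show ?thesis .
    qed
    moreover have "(\<lambda>m. ?tail m / l\<^sup>2) \<longlonglongrightarrow> 0"
      using tendsto_divide_zero[OF tail_0] by blast
    ultimately have "prob N \<le> 0" by (intro LIMSEQ_le_const) auto
    then have "N \<in> null_sets M"
      using N_sets measure_nonneg[of M N] by (auto simp: null_sets_def emeasure_eq_measure)
    then show ?thesis
      by (rule AE_I') (auto simp: N_def l_def not_less)
  qed
  then have "AE x in M. \<forall>q. \<exists>m. \<forall>i\<ge>m. \<bar>increment_sum m i x\<bar> < 1 / real (Suc q)"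
    by (simp add: AE_all_countable)
  then show ?thesis
    by eventually_elim (auto intro: summable_if_eventually_small_partial_sums simp: increment_sum_def)
qed

end

lemma borel_measurable_vec_lambda:
  fixes g :: "'p::finite \<Rightarrow> 'a \<Rightarrow> real"
  assumes "\<And>t. g t \<in> borel_measurable N"
  shows "(\<lambda>x. \<chi> t. g t x) \<in> borel_measurable N"
  unfolding borel_measurable_euclidean_space[where 'c="real^'p"]
  using assms by (auto simp: Basis_vec_def inner_axis)

lemma borel_measurable_vec_nth [measurable]:
  fixes f :: "'a \<Rightarrow> real ^ 'p"
  assumes "f \<in> borel_measurable N"
  shows "(\<lambda>x. f x $ t) \<in> borel_measurable N"
  using borel_measurable_inner[OF assms, of "\<lambda>_. axis t 1"] by (simp add: inner_axis)

lemma vcond_exp_measurable [measurable]: "vcond_exp M F Y \<in> borel_measurable F"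
  unfolding vcond_exp_def by (rule borel_measurable_vec_lambda) simp

lemma power2_norm_vec: "(norm (x :: real ^ 'p))\<^sup>2 = (\<Sum>t\<in>UNIV. (x $ t)\<^sup>2)"
  unfolding power2_norm_eq_inner inner_vec_def by (simp add: power2_eq_square)

lemma power2_vec_nth_le_power2_norm: "(x $ t)\<^sup>2 \<le> (norm (x :: real ^ 'p))\<^sup>2"
  by (metis abs_ge_zero component_le_norm_cart power2_abs power_mono)

context finite_measure_subalgebra
begin

lemma square_integrable_real_cond_exp:
  assumes "f \<in> borel_measurable M" "integrable M (\<lambda>x. (f x)\<^sup>2)"
  shows "integrable M (\<lambda>x. (real_cond_exp M F f x)\<^sup>2)"
  using integrable_convex_cond_exp[of f UNIV _ _ power2] integrable_of_square_integrable[OF assms]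
    assms(2) convex_power2 by auto

lemma integral_mult_cond_exp_residual_eq_0:
  assumes [measurable]: "f \<in> borel_measurable M" and f_sq: "integrable M (\<lambda>x. (f x)\<^sup>2)"
    and W_F: "W \<in> borel_measurable F" and W_sq: "integrable M (\<lambda>x. (W x)\<^sup>2)"
  shows "(\<integral>x. W x * (f x - real_cond_exp M F f x) \<partial>M) = 0"
proof -
  have WM: "W \<in> borel_measurable M" by (rule measurable_from_subalg[OF subalg W_F])
  have Wf: "integrable M (\<lambda>x. W x * f x)"
    by (rule integrable_mult_of_square_integrable[OF WM _ W_sq f_sq]) simp
  have "(\<integral>x. W x * (f x - real_cond_exp M F f x) \<partial>M)
      = (\<integral>x. W x * f x \<partial>M) - (\<integral>x. W x * real_cond_exp M F f x \<partial>M)"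
    using Wf real_cond_exp_intg(1)[OF Wf W_F] by (simp add: right_diff_distrib)
  also have "\<dots> = 0" using real_cond_exp_intg(2)[OF Wf W_F] by simp
  finally show ?thesis .
qed

lemma AE_cond_exp_residual_eq_0:
  assumes "integrable M f"
  shows "AE x in M. real_cond_exp M F (\<lambda>x. f x - real_cond_exp M F f x) x = 0"
proof -
  have ce: "integrable M (real_cond_exp M F f)" using real_cond_exp_int(1)[OF assms] .
  have "AE x in M. real_cond_exp M F (real_cond_exp M F f) x = real_cond_exp M F f x"
    using real_cond_exp_F_meas[OF ce] by simp
  with real_cond_exp_diff[OF assms ce] show ?thesis by eventually_elim simp
qed

lemma AE_cond_var_eq_cond_exp_square:
  assumes [measurable]: "g \<in> borel_measurable M"
    and centered: "AE x in M. real_cond_exp M F g x = 0"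
  shows "AE x in M. cond_var M F g x = real_cond_exp M F (\<lambda>x. (g x)\<^sup>2) x"
  unfolding cond_var_def
  by (rule real_cond_exp_cong) (use centered in \<open>auto elim: AE_mp\<close>)

end

lemma power2_inner_le_bounded:
  fixes c e :: "'v::real_inner"
  assumes "norm c \<le> B"
  shows "(c \<bullet> e)\<^sup>2 \<le> B\<^sup>2 * (norm e)\<^sup>2"
proof -
  have "(c \<bullet> e)\<^sup>2 \<le> (norm c * norm e)\<^sup>2"
    by (metis Cauchy_Schwarz_ineq2 abs_ge_zero power2_abs power_mono)
  also have "\<dots> \<le> B\<^sup>2 * (norm e)\<^sup>2"
    unfolding power_mult_distrib by (rule mult_right_mono) (use assms in \<open>auto intro: power_mono\<close>)
  finally show ?thesis .
qed

context filtered_prob_space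
begin

lemma orthogonal_increments_bounded_inner:
  fixes e c :: "nat \<Rightarrow> 'a \<Rightarrow> real ^ 'p"
  assumes e_measurable: "\<And>j t. (\<lambda>x. e j x $ t) \<in> borel_measurable (F (Suc j))"
    and e_square_integrable: "\<And>j t. integrable M (\<lambda>x. (e j x $ t)\<^sup>2)"
    and e_orthogonal: "\<And>j t Z. Z \<in> borel_measurable (F j) \<Longrightarrow> integrable M (\<lambda>x. (Z x)\<^sup>2) \<Longrightarrow>
      (\<integral>x. Z x * e j x $ t \<partial>M) = 0"
    and c_measurable: "\<And>j. c j \<in> borel_measurable (F j)"
    and c_bounded: "\<And>j x. norm (c j x) \<le> B"
  shows "orthogonal_increments M F (\<lambda>j x. c j x \<bullet> e j x)"
proof (rule orthogonal_increments.intro[OF filtered_prob_space_axioms orthogonal_increments_axioms.intro])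
  have inner_sum: "c j x \<bullet> e j x = (\<Sum>t\<in>UNIV. c j x $ t * e j x $ t)" for j x
    by (simp add: inner_vec_def)
  have [measurable]: "c j \<in> borel_measurable M" for j
    by (rule measurable_filtration_imp_measurable[OF c_measurable])
  have c_nth_bounded: "\<bar>c j x $ t\<bar> \<le> B" for j x t
    using component_le_norm_cart c_bounded order_trans by blast
  show inner_F: "(\<lambda>x. c j x \<bullet> e j x) \<in> borel_measurable (F (Suc j))" for j
  proof -
    have [measurable]: "c j \<in> borel_measurable (F (Suc j))"
      using measurable_filtration_mono[OF c_measurable] by simp
    have [measurable]: "(\<lambda>x. e j x $ t) \<in> borel_measurable (F (Suc j))" for t
      by (rule e_measurable)
    show ?thesis unfolding inner_sum by measurable
  qed
  show "integrable M (\<lambda>x. (c j x \<bullet> e j x)\<^sup>2)" for j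
  proof (rule Bochner_Integration.integrable_bound[of _ "\<lambda>x. B\<^sup>2 * (norm (e j x))\<^sup>2"])
    show "integrable M (\<lambda>x. B\<^sup>2 * (norm (e j x))\<^sup>2)"
      unfolding power2_norm_vec using e_square_integrable by simp
    show "AE x in M. norm ((c j x \<bullet> e j x)\<^sup>2) \<le> norm (B\<^sup>2 * (norm (e j x))\<^sup>2)"
      using power2_inner_le_bounded[OF c_bounded] by simp
    show "(\<lambda>x. (c j x \<bullet> e j x)\<^sup>2) \<in> borel_measurable M"
      using measurable_filtration_imp_measurable[OF inner_F] by measurable
  qed
  show "(\<integral>x. Z x * (c j x \<bullet> e j x) \<partial>M) = 0"
    if Z_F: "Z \<in> borel_measurable (F j)" and Z_sq: "integrable M (\<lambda>x. (Z x)\<^sup>2)" for Z j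
  proof -
    have [measurable]: "Z \<in> borel_measurable M" by (rule measurable_filtration_imp_measurable[OF Z_F])
    have cZ_F: "(\<lambda>x. c j x $ t * Z x) \<in> borel_measurable (F j)" for t
      using Z_F c_measurable by measurable
    have cZ_sq: "integrable M (\<lambda>x. (c j x $ t * Z x)\<^sup>2)" for t
      by (rule integrable_square_bounded_mult[OF _ _ Z_sq c_nth_bounded]) simp_all
    have "(\<integral>x. Z x * (c j x \<bullet> e j x) \<partial>M) = (\<integral>x. (\<Sum>t\<in>UNIV. (c j x $ t * Z x) * e j x $ t) \<partial>M)"
      unfolding inner_sum by (simp add: sum_distrib_left ac_simps)
    also have "\<dots> = (\<Sum>t\<in>UNIV. \<integral>x. (c j x $ t * Z x) * e j x $ t \<partial>M)"
      by (rule Bochner_Integration.integral_sum,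
          rule integrable_mult_of_square_integrable[OF _ _ cZ_sq e_square_integrable])
        (auto intro: measurable_filtration_imp_measurable[OF e_measurable])
    also have "\<dots> = 0" using e_orthogonal[OF cZ_F cZ_sq] by simp
    finally show ?thesis .
  qed
qed

lemma AE_summable_bounded_inner_increments:
  fixes e c :: "nat \<Rightarrow> 'a \<Rightarrow> real ^ 'p"
  assumes e_measurable: "\<And>j t. (\<lambda>x. e j x $ t) \<in> borel_measurable (F (Suc j))"
    and e_square_integrable: "\<And>j t. integrable M (\<lambda>x. (e j x $ t)\<^sup>2)"
    and e_orthogonal: "\<And>j t Z. Z \<in> borel_measurable (F j) \<Longrightarrow> integrable M (\<lambda>x. (Z x)\<^sup>2) \<Longrightarrow>
      (\<integral>x. Z x * e j x $ t \<partial>M) = 0"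
    and e_summable: "summable (\<lambda>j. \<integral>x. (norm (e j x))\<^sup>2 \<partial>M)"
    and c_measurable: "\<And>j. c j \<in> borel_measurable (F j)"
    and c_bounded: "\<And>j x. norm (c j x) \<le> B"
  shows "AE x in M. summable (\<lambda>j. c j x \<bullet> e j x)"
proof -
  interpret orthogonal_increments M F "\<lambda>j x. c j x \<bullet> e j x"
    by (rule orthogonal_increments_bounded_inner[OF e_measurable e_square_integrable e_orthogonal
          c_measurable c_bounded])
  have "(\<integral>x. (c j x \<bullet> e j x)\<^sup>2 \<partial>M) \<le> B\<^sup>2 * (\<integral>x. (norm (e j x))\<^sup>2 \<partial>M)" for j
    using integral_mono[OF increment_square_integrable _ power2_inner_le_bounded[OF c_bounded]]
      e_square_integrable by (simp add: power2_norm_vec)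
  then have "summable (\<lambda>j. \<integral>x. (c j x \<bullet> e j x)\<^sup>2 \<partial>M)"
    by (intro summable_comparison_test'[OF summable_mult[OF e_summable, of "B\<^sup>2"], where N=0])
      (simp add: integral_nonneg_AE)
  then show ?thesis by (rule AE_summable_increments)
qed

end

section \<open>Residuals of a square-integrable adapted process\<close>

lemma AE_summable_of_summable_integral:
  fixes f :: "nat \<Rightarrow> 'a \<Rightarrow> real"
  assumes meas: "\<And>i. f i \<in> borel_measurable M" and int: "\<And>i. integrable M (f i)"
    and nonneg: "\<And>i x. 0 \<le> f i x" and summable: "summable (\<lambda>i. \<integral>x. f i x \<partial>M)"
  shows "AE x in M. summable (\<lambda>i. f i x)"
proof -
  have "(\<integral>\<^sup>+x. (\<Sum>i. ennreal (f i x)) \<partial>M) = (\<Sum>i. \<integral>\<^sup>+x. ennreal (f i x) \<partial>M)"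
    by (rule nn_integral_suminf) (use meas in auto)
  also have "\<dots> = (\<Sum>i. ennreal (\<integral>x. f i x \<partial>M))"
    by (subst nn_integral_eq_integral[OF int]) (use nonneg in auto)
  also have "\<dots> = ennreal (\<Sum>i. \<integral>x. f i x \<partial>M)"
    by (rule suminf_ennreal2[OF _ summable]) (use nonneg in \<open>auto intro: integral_nonneg_AE\<close>)
  finally have "AE x in M. (\<Sum>i. ennreal (f i x)) < \<infinity>"
    by (intro finite_nn_integral_imp_ae_finite) (use meas in auto)
  then show ?thesis
    by eventually_elim (rule summable_suminf_not_top, use nonneg in auto)
qed

locale L2_adapted_process = filtered_prob_space +
  fixes X :: "nat \<Rightarrow> 'a \<Rightarrow> real ^ 'p"
  assumes adapted: "\<And>n. X n \<in> borel_measurable (F n)"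
    and square_integrable: "\<And>n. integrable M (\<lambda>x. (norm (X n x))\<^sup>2)"
begin

lemma measurable_process [measurable]: "X n \<in> borel_measurable M"
  by (rule measurable_filtration_imp_measurable[OF adapted])

lemma square_integrable_nth: "integrable M (\<lambda>x. (X n x $ t)\<^sup>2)"
  by (rule Bochner_Integration.integrable_bound[OF square_integrable[of n]])
    (auto simp: power2_vec_nth_le_power2_norm)

lemma resid_Suc_nth:
  "resid M F X (Suc j) x $ t = X (Suc j) x $ t - real_cond_exp M (F j) (\<lambda>x. X (Suc j) x $ t) x"
  by (simp add: resid_def vcond_exp_def)

lemma resid_nth_measurable: "(\<lambda>x. resid M F X (Suc j) x $ t) \<in> borel_measurable (F (Suc j))"
proof -
  have [measurable]: "X (Suc j) \<in> borel_measurable (F (Suc j))" by (rule adapted)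
  have [measurable]: "real_cond_exp M (F j) (\<lambda>x. X (Suc j) x $ t) \<in> borel_measurable (F (Suc j))"
    by (rule measurable_filtration_mono[OF borel_measurable_cond_exp]) simp
  show ?thesis unfolding resid_Suc_nth by measurable
qed

lemma resid_measurable [measurable]: "resid M F X n \<in> borel_measurable M"
  unfolding resid_def
  using measurable_filtration_imp_measurable[OF vcond_exp_measurable] by measurable

lemma resid_nth_square_integrable: "integrable M (\<lambda>x. (resid M F X (Suc j) x $ t)\<^sup>2)"
proof -
  interpret finite_measure_subalgebra M "F j" by (rule finite_measure_subalgebra_filtration)
  have "integrable M (\<lambda>x. (X (Suc j) x $ t + - real_cond_exp M (F j) (\<lambda>x. X (Suc j) x $ t) x)\<^sup>2)"
    by (rule integrable_square_add)
      (simp_all add: square_integrable_nth square_integrable_real_cond_exp)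
  then show ?thesis by (simp add: resid_Suc_nth)
qed

lemma resid_nth_orthogonal:
  assumes "Z \<in> borel_measurable (F j)" "integrable M (\<lambda>x. (Z x)\<^sup>2)"
  shows "(\<integral>x. Z x * resid M F X (Suc j) x $ t \<partial>M) = 0"
proof -
  interpret finite_measure_subalgebra M "F j" by (rule finite_measure_subalgebra_filtration)
  show ?thesis
    unfolding resid_Suc_nth
    by (rule integral_mult_cond_exp_residual_eq_0[OF _ square_integrable_nth assms]) simp
qed

lemma integral_resid_nth_square_le:
  assumes "AE x in M. cond_var M (F j) (\<lambda>x. resid M F X (Suc j) x $ t) x \<le> w"
  shows "(\<integral>x. (resid M F X (Suc j) x $ t)\<^sup>2 \<partial>M) \<le> w"
proof -
  interpret finite_measure_subalgebra M "F j" by (rule finite_measure_subalgebra_filtration)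
  let ?r = "\<lambda>x. resid M F X (Suc j) x $ t"
  have "AE x in M. real_cond_exp M (F j) ?r x = 0"
    unfolding resid_Suc_nth
    by (rule AE_cond_exp_residual_eq_0[OF integrable_of_square_integrable[OF _ square_integrable_nth]]) simp
  then have "AE x in M. cond_var M (F j) ?r x = real_cond_exp M (F j) (\<lambda>x. (?r x)\<^sup>2) x"
    by (intro AE_cond_var_eq_cond_exp_square)
      (simp_all add: measurable_filtration_imp_measurable[OF resid_nth_measurable])
  with assms have le: "AE x in M. real_cond_exp M (F j) (\<lambda>x. (?r x)\<^sup>2) x \<le> w"
    by eventually_elim simp
  have "(\<integral>x. (?r x)\<^sup>2 \<partial>M) = (\<integral>x. real_cond_exp M (F j) (\<lambda>x. (?r x)\<^sup>2) x \<partial>M)"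
    using real_cond_exp_int(2)[OF resid_nth_square_integrable] by simp
  also have "\<dots> \<le> (\<integral>x. w \<partial>M)"
    by (rule integral_mono_AE[OF real_cond_exp_int(1)[OF resid_nth_square_integrable] _ le]) simp
  finally show ?thesis by (simp add: prob_space)
qed

lemma summable_integral_norm_resid_square:
  assumes "A8 M F X"
  shows "summable (\<lambda>j. \<integral>x. (norm (resid M F X (Suc j) x))\<^sup>2 \<partial>M)"
proof -
  obtain v where v: "\<And>n. 0 \<le> v n" "summable v"
    and cond_var_le: "AE x in M. \<forall>n\<ge>1. \<forall>t. cond_var M (F (n - 1)) (\<lambda>x. resid M F X n x $ t) x \<le> v n"
    using assms unfolding A8_def by blast
  have le: "(\<integral>x. (norm (resid M F X (Suc j) x))\<^sup>2 \<partial>M) \<le> real CARD('p) * v (Suc j)" for j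
  proof -
    have "(\<integral>x. (norm (resid M F X (Suc j) x))\<^sup>2 \<partial>M) = (\<Sum>t\<in>UNIV. \<integral>x. (resid M F X (Suc j) x $ t)\<^sup>2 \<partial>M)"
      unfolding power2_norm_vec by (simp add: resid_nth_square_integrable)
    also have "\<dots> \<le> (\<Sum>t\<in>(UNIV :: 'p set). v (Suc j))"
    proof (intro sum_mono integral_resid_nth_square_le)
      show "AE x in M. cond_var M (F j) (\<lambda>x. resid M F X (Suc j) x $ t) x \<le> v (Suc j)" for t
        using cond_var_le by eventually_elim (erule allE[of _ "Suc j"], simp)
    qed
    finally show ?thesis by simp
  qed
  have "summable (\<lambda>j. real CARD('p) * v (Suc j))"
    using v(2) by (intro summable_mult) (simp add: summable_Suc_iff)
  then show ?thesis
    by (rule summable_comparison_test'[where N=0]) (use le in \<open>simp add: integral_nonneg_AE\<close>)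
qed

lemma AE_summable_norm_resid_square:
  assumes "A8 M F X"
  shows "AE x in M. summable (\<lambda>j. (norm (resid M F X (Suc j) x))\<^sup>2)"
proof (rule AE_summable_of_summable_integral[OF _ _ _ summable_integral_norm_resid_square[OF assms]])
  show "integrable M (\<lambda>x. (norm (resid M F X (Suc j) x))\<^sup>2)" for j
    unfolding power2_norm_vec by (simp add: resid_nth_square_integrable)
qed simp_all

lemma AE_summable_inner_resid:
  assumes "A8 M F X" "\<And>j. c j \<in> borel_measurable (F j)" "\<And>j x. norm (c j x) \<le> B"
  shows "AE x in M. summable (\<lambda>j. c j x \<bullet> resid M F X (Suc j) x)"
  by (rule AE_summable_bounded_inner_increments[OF resid_nth_measurable resid_nth_square_integrable
        resid_nth_orthogonal summable_integral_norm_resid_square[OF assms(1)] assms(2,3)])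

end

section \<open>Nonnegative sequences with resets\<close>

lemma convergent_if_eventually_almost_decreasing:
  fixes u c :: "nat \<Rightarrow> real"
  assumes nonneg: "\<And>j. 0 \<le> u j" and summable: "summable c"
    and step: "\<And>j. N \<le> j \<Longrightarrow> u (Suc j) \<le> u j + c j"
  shows "convergent u"
proof -
  obtain B where B: "\<And>n. \<bar>\<Sum>k<n. c k\<bar> \<le> B"
    using summable_imp_sums_bounded[OF summable] unfolding bounded_iff by auto
  define w where "w n = u (n + N) - (\<Sum>k<n + N. c k)" for n
  have "decseq w"
  proof (rule decseq_SucI)
    fix n
    have "u (Suc (n + N)) \<le> u (n + N) + c (n + N)" by (rule step) simp
    then show "w (Suc n) \<le> w n" by (simp add: w_def)
  qed
  moreover have "- B \<le> w n" for n
    using B[of "n + N"] nonneg[of "n + N"] unfolding w_def by linarith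
  ultimately obtain L where "w \<longlonglongrightarrow> L" using decseq_convergent by blast
  then have "(\<lambda>n. u n - (\<Sum>k<n. c k)) \<longlonglongrightarrow> L"
    unfolding w_def by (rule LIMSEQ_offset)
  then have "(\<lambda>n. (u n - (\<Sum>k<n. c k)) + (\<Sum>k<n. c k)) \<longlonglongrightarrow> L + suminf c"
    by (intro tendsto_add summable_LIMSEQ[OF summable])
  then show ?thesis unfolding convergent_def by auto
qed

text \<open>After a reset at time \<open>l\<close> the sequence is at most \<open>r l\<close> plus the increments collected since.\<close>

lemma tendsto_zero_if_frequent_resets:
  fixes u c r :: "nat \<Rightarrow> real" and R :: "nat \<Rightarrow> bool"
  assumes nonneg: "\<And>j. 0 \<le> u j" and summable: "summable c" and r: "r \<longlonglongrightarrow> 0"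
    and reset: "\<And>j. R j \<Longrightarrow> u (Suc j) \<le> r j"
    and step: "\<And>j. \<not> R j \<Longrightarrow> u (Suc j) \<le> u j + c j"
    and frequent: "\<And>N. \<exists>j\<ge>N. R j"
  shows "u \<longlonglongrightarrow> 0"
proof (rule LIMSEQ_I)
  fix \<epsilon> :: real assume "0 < \<epsilon>"
  then obtain N1 where N1: "\<forall>a\<ge>N1. \<forall>b. norm (sum c {a..<b}) < \<epsilon> / 2"
    using summable unfolding summable_Cauchy by (meson half_gt_zero)
  obtain N2 where N2: "\<forall>j\<ge>N2. \<bar>r j\<bar> < \<epsilon> / 2"
    using LIMSEQ_D[OF r, of "\<epsilon> / 2"] \<open>0 < \<epsilon>\<close> by auto
  obtain \<rho> where \<rho>: "max N1 N2 \<le> \<rho>" "R \<rho>" using frequent by blast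
  have last_reset: "\<exists>l. max N1 N2 \<le> l \<and> l < n \<and> u n \<le> r l + sum c {Suc l..<n}" if "Suc \<rho> \<le> n" for n
    using that
  proof (induction n rule: dec_induct)
    case base
    show ?case using \<rho> reset[of \<rho>] by (intro exI[of _ \<rho>]) auto
  next
    case (step n)
    show ?case
    proof (cases "R n")
      case True
      then show ?thesis using reset[of n] step(1) \<rho>(1) by (intro exI[of _ n]) auto
    next
      case False
      obtain l where l: "max N1 N2 \<le> l" "l < n" "u n \<le> r l + sum c {Suc l..<n}" using step(3) by blast
      have "u (Suc n) \<le> r l + (sum c {Suc l..<n} + c n)" using l(3) assms(5)[OF False] by simp
      also have "sum c {Suc l..<n} + c n = sum c {Suc l..<Suc n}" using l(2) by simp
      finally show ?thesis using l by (intro exI[of _ l]) auto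
    qed
  qed
  show "\<exists>n0. \<forall>n\<ge>n0. norm (u n - 0) < \<epsilon>"
  proof (intro exI allI impI)
    fix n assume "Suc \<rho> \<le> n"
    then obtain l where l: "max N1 N2 \<le> l" "u n \<le> r l + sum c {Suc l..<n}" using last_reset by blast
    have "\<bar>r l\<bar> < \<epsilon> / 2" "\<bar>sum c {Suc l..<n}\<bar> < \<epsilon> / 2" using N1 N2 l(1) by auto
    then show "norm (u n - 0) < \<epsilon>" using l(2) nonneg[of n] by simp
  qed
qed

lemma convergent_if_almost_decreasing_with_resets:
  fixes u c r :: "nat \<Rightarrow> real" and R :: "nat \<Rightarrow> bool"
  assumes nonneg: "\<And>j. 0 \<le> u j" and summable: "summable c" and r: "r \<longlonglongrightarrow> 0"
    and reset: "\<And>j. R j \<Longrightarrow> u (Suc j) \<le> r j"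
    and step: "\<And>j. \<not> R j \<Longrightarrow> u (Suc j) \<le> u j + c j"
  shows "convergent u"
proof (cases "\<exists>N. \<forall>j\<ge>N. \<not> R j")
  case True
  then obtain N where "\<And>j. N \<le> j \<Longrightarrow> \<not> R j" by blast
  then show ?thesis by (intro convergent_if_eventually_almost_decreasing[OF nonneg summable, of N] step)
next
  case False
  then have "u \<longlonglongrightarrow> 0" using tendsto_zero_if_frequent_resets[OF assms] by auto
  then show ?thesis unfolding convergent_def by blast
qed

text \<open>A positive limit would keep the drift \<open>d j * g j\<close> bounded below by a multiple of \<open>d j\<close>, and the
  drift is dominated by a telescoping plus a summable series.\<close>

lemma tendsto_zero_if_nonsummable_drift:
  fixes u c d g :: "nat \<Rightarrow> real" and R :: "nat \<Rightarrow> bool"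
  assumes nonneg: "\<And>j. 0 \<le> u j" and "convergent u" and summable: "summable c"
    and d_nonneg: "\<And>j. 0 \<le> d j" and d_not_summable: "\<not> summable d"
    and step: "\<And>j. \<not> R j \<Longrightarrow> u (Suc j) \<le> u j - d j * g j + c j"
    and away_from_0: "\<And>a. 0 < a \<Longrightarrow> \<exists>\<delta>>0. \<forall>j. a \<le> u j \<longrightarrow> \<not> R j \<and> \<delta> \<le> g j"
  shows "u \<longlonglongrightarrow> 0"
proof -
  obtain L where L: "u \<longlonglongrightarrow> L" using \<open>convergent u\<close> unfolding convergent_def by blast
  have "L \<le> 0"
  proof (rule ccontr)
    assume "\<not> L \<le> 0"
    then have "eventually (\<lambda>j. L / 2 < u j) sequentially"
      using order_tendstoD(1)[OF L, of "L / 2"] by simp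
    then obtain N where N: "\<And>j. N \<le> j \<Longrightarrow> L / 2 < u j"
      unfolding eventually_sequentially by blast
    obtain \<delta> where \<delta>: "0 < \<delta>" "\<And>j. L / 2 \<le> u j \<Longrightarrow> \<not> R j \<and> \<delta> \<le> g j"
      using away_from_0[of "L / 2"] \<open>\<not> L \<le> 0\<close> by auto
    have le: "d j \<le> (u j - u (Suc j) + c j) / \<delta>" if "N \<le> j" for j
    proof -
      have "\<not> R j" "\<delta> \<le> g j" using \<delta>(2)[OF less_imp_le[OF N[OF that]]] by auto
      then have "d j * \<delta> \<le> u j - u (Suc j) + c j"
        using step[of j] mult_left_mono[OF \<open>\<delta> \<le> g j\<close> d_nonneg[of j]] by linarith
      then show ?thesis using \<delta>(1) by (simp add: pos_le_divide_eq)
    qed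
    have "summable (\<lambda>j. (u j - u (Suc j) + c j) / \<delta>)"
      by (intro summable_divide summable_add telescope_summable'[OF L] summable)
    then have "summable d"
      by (rule summable_comparison_test'[where N=N]) (use le d_nonneg in auto)
    with d_not_summable show False ..
  qed
  moreover have "0 \<le> L" by (rule LIMSEQ_le_const[OF L]) (use nonneg in auto)
  ultimately show ?thesis using L by simp
qed

section \<open>Perturbed recursions\<close>

lemma ln_one_plus_diff_le:
  fixes y y' :: real
  assumes "0 \<le> y" "0 \<le> y'"
  shows "ln (1 + y') - ln (1 + y) \<le> (y' - y) / (1 + y)"
proof -
  have "ln (1 + y') - ln (1 + y) = ln ((1 + y') / (1 + y))" using assms by (simp add: ln_div)
  also have "\<dots> \<le> (1 + y') / (1 + y) - 1" by (rule ln_le_minus_one) (use assms in simp)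
  also have "\<dots> = (y' - y) / (1 + y)" using assms by (simp add: field_simps)
  finally show ?thesis .
qed

text \<open>The potential \<open>ln (1 + \<parallel>x j\<parallel>\<^sup>2)\<close> is used instead of \<open>\<parallel>x j\<parallel>\<close>: its increments are bounded by the
  normalised cross term and \<open>\<parallel>e j\<parallel>\<^sup>2\<close> even where \<open>\<parallel>x j\<parallel>\<close> is large.\<close>

locale perturbed_recursion =
  fixes x m e :: "nat \<Rightarrow> 'v::real_inner" and \<beta> :: "nat \<Rightarrow> real"
  assumes decomposition: "\<And>j. x (Suc j) = m j + e j"
    and mean_bound: "\<And>j. x j \<noteq> 0 \<Longrightarrow> norm (m j) \<le> \<beta> (Suc j) * norm (x j)"
    and summable_cross: "summable (\<lambda>j. if x j = 0 then 0 else (m j /\<^sub>R (1 + (norm (x j))\<^sup>2)) \<bullet> e j)"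
    and summable_noise: "summable (\<lambda>j. (norm (e j))\<^sup>2)"
    and mean_at_zero: "(\<lambda>j. if x j = 0 then m j else 0) \<longlonglongrightarrow> 0"
begin

definition potential :: "nat \<Rightarrow> real" where
  "potential j = ln (1 + (norm (x j))\<^sup>2)"

definition weight :: "nat \<Rightarrow> real" where
  "weight j = (norm (x j))\<^sup>2 / (1 + (norm (x j))\<^sup>2)"

definition perturbation :: "nat \<Rightarrow> real" where
  "perturbation j = 2 * (if x j = 0 then 0 else (m j /\<^sub>R (1 + (norm (x j))\<^sup>2)) \<bullet> e j) + (norm (e j))\<^sup>2"

definition reset_bound :: "nat \<Rightarrow> real" where
  "reset_bound j = 2 * (norm (if x j = 0 then m j else 0))\<^sup>2 + 2 * (norm (e j))\<^sup>2"

lemma potential_nonneg: "0 \<le> potential j"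
  by (simp add: potential_def)

lemma weight_nonneg: "0 \<le> weight j"
  by (simp add: weight_def)

lemma weight_le_1: "weight j \<le> 1"
  by (simp add: weight_def add_pos_nonneg)

lemma summable_perturbation: "summable perturbation"
  unfolding perturbation_def[abs_def] by (intro summable_add summable_mult summable_cross summable_noise)

lemma reset_bound_tendsto_0: "reset_bound \<longlonglongrightarrow> 0"
proof -
  have "reset_bound \<longlonglongrightarrow> 2 * (norm (0::'v))\<^sup>2 + 2 * 0"
    unfolding reset_bound_def[abs_def]
    by (intro tendsto_intros mean_at_zero summable_LIMSEQ_zero[OF summable_noise])
  then show ?thesis by simp
qed

lemma potential_Suc_le:
  assumes "x j \<noteq> 0"
  shows "potential (Suc j) \<le> potential j + ((\<beta> (Suc j))\<^sup>2 - 1) * weight j + perturbation j"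
proof -
  define D where "D = 1 + (norm (x j))\<^sup>2"
  have D: "1 \<le> D" unfolding D_def by simp
  have square: "(norm (x (Suc j)))\<^sup>2 = (norm (m j))\<^sup>2 + 2 * (m j \<bullet> e j) + (norm (e j))\<^sup>2"
    unfolding decomposition power2_norm_eq_inner by (simp add: inner_add algebra_simps inner_commute)
  have mean: "(norm (m j))\<^sup>2 \<le> (\<beta> (Suc j))\<^sup>2 * (norm (x j))\<^sup>2"
    using power_mono[OF mean_bound[OF assms] norm_ge_zero] by (simp add: power_mult_distrib)
  have "potential (Suc j) - potential j \<le> ((norm (x (Suc j)))\<^sup>2 - (norm (x j))\<^sup>2) / D"
    unfolding potential_def D_def by (rule ln_one_plus_diff_le) simp_all
  also have "\<dots> \<le> (((\<beta> (Suc j))\<^sup>2 - 1) * (norm (x j))\<^sup>2 + 2 * (m j \<bullet> e j) + (norm (e j))\<^sup>2) / D"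
    by (rule divide_right_mono) (use square mean D in \<open>auto simp: algebra_simps\<close>)
  also have "\<dots> = ((\<beta> (Suc j))\<^sup>2 - 1) * weight j + 2 * ((m j /\<^sub>R D) \<bullet> e j) + (norm (e j))\<^sup>2 / D"
    using D by (simp add: weight_def D_def[symmetric] field_simps)
  also have "(norm (e j))\<^sup>2 / D \<le> (norm (e j))\<^sup>2"
    using D by (simp add: divide_le_eq mult_le_cancel_left1)
  finally show ?thesis using assms by (simp add: perturbation_def D_def)
qed

lemma potential_Suc_le_reset_bound:
  assumes "x j = 0"
  shows "potential (Suc j) \<le> reset_bound j"
proof -
  have "potential (Suc j) \<le> (norm (x (Suc j)))\<^sup>2"
    unfolding potential_def using ln_le_minus_one[of "1 + (norm (x (Suc j)))\<^sup>2"] by (simp add: add_pos_nonneg)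
  also have "\<dots> \<le> (norm (m j) + norm (e j))\<^sup>2"
    unfolding decomposition by (rule power_mono[OF norm_triangle_ineq]) simp
  also have "\<dots> \<le> 2 * (norm (m j))\<^sup>2 + 2 * (norm (e j))\<^sup>2"
    using zero_le_power2[of "norm (m j) - norm (e j)"] unfolding power2_diff power2_sum by linarith
  finally show ?thesis using assms by (simp add: reset_bound_def)
qed

lemma norm_eq_potential: "norm (x j) = sqrt (exp (potential j) - 1)"
  by (simp add: potential_def add_pos_nonneg)

lemma weight_bounded_below:
  assumes "0 < a" "a \<le> potential j"
  shows "x j \<noteq> 0" "1 - exp (- a) \<le> weight j"
proof -
  have "exp a \<le> 1 + (norm (x j))\<^sup>2"
    using exp_mono[OF assms(2)] by (simp add: potential_def add_pos_nonneg)
  moreover have "1 < exp a" using assms(1) by simp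
  ultimately show "x j \<noteq> 0" by auto
  have "1 - 1 / exp a \<le> 1 - 1 / (1 + (norm (x j))\<^sup>2)"
    using \<open>exp a \<le> 1 + (norm (x j))\<^sup>2\<close> by (simp add: frac_le)
  then show "1 - exp (- a) \<le> weight j"
    by (simp add: weight_def exp_minus field_simps add_pos_nonneg)
qed

lemma convergent_potential:
  assumes "summable (\<lambda>j. max 0 ((\<beta> (Suc j))\<^sup>2 - 1))"
  shows "convergent potential"
proof (rule convergent_if_almost_decreasing_with_resets[OF potential_nonneg
      summable_add[OF assms summable_perturbation] reset_bound_tendsto_0])
  show "potential (Suc j) \<le> reset_bound j" if "x j = 0" for j
    using potential_Suc_le_reset_bound[OF that] .
  show "potential (Suc j) \<le> potential j + (max 0 ((\<beta> (Suc j))\<^sup>2 - 1) + perturbation j)"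
    if "x j \<noteq> 0" for j
  proof -
    have "((\<beta> (Suc j))\<^sup>2 - 1) * weight j \<le> max 0 ((\<beta> (Suc j))\<^sup>2 - 1)"
      using weight_nonneg[of j] weight_le_1[of j] by (simp add: max_def mult_left_le mult_nonpos_nonneg)
    then show ?thesis using potential_Suc_le[OF that] by linarith
  qed
qed

theorem convergent_norm:
  assumes "summable (\<lambda>j. max 0 ((\<beta> (Suc j))\<^sup>2 - 1))"
  shows "convergent (\<lambda>j. norm (x j))"
proof -
  obtain L where "potential \<longlonglongrightarrow> L" using convergent_potential[OF assms] unfolding convergent_def by blast
  then have "(\<lambda>j. sqrt (exp (potential j) - 1)) \<longlonglongrightarrow> sqrt (exp L - 1)" by (intro tendsto_intros)
  then show ?thesis unfolding norm_eq_potential convergent_def by blast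
qed

theorem norm_tendsto_0:
  assumes \<beta>: "\<And>j. 0 \<le> \<beta> j" "\<And>j. \<beta> j \<le> 1" and not_summable: "\<not> summable (\<lambda>j. 1 - \<beta> (Suc j))"
  shows "(\<lambda>j. norm (x j)) \<longlonglongrightarrow> 0"
proof -
  have "max 0 ((\<beta> (Suc j))\<^sup>2 - 1) = 0" for j
    using power_le_one[OF \<beta>(1)[of "Suc j"] \<beta>(2)[of "Suc j"], of 2] by simp
  then have "summable (\<lambda>j. max 0 ((\<beta> (Suc j))\<^sup>2 - 1))" by simp
  have "potential \<longlonglongrightarrow> 0"
  proof (rule tendsto_zero_if_nonsummable_drift[OF potential_nonneg convergent_potential
        summable_perturbation _ not_summable])
    show "0 \<le> 1 - \<beta> (Suc j)" for j using \<beta>(2) by simp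
    show "potential (Suc j) \<le> potential j - (1 - \<beta> (Suc j)) * weight j + perturbation j"
      if "\<not> x j = 0" for j
    proof -
      have "(\<beta> (Suc j))\<^sup>2 - 1 \<le> - (1 - \<beta> (Suc j))"
        using \<beta>[of "Suc j"] by (simp add: power2_eq_square mult_left_le)
      then have "((\<beta> (Suc j))\<^sup>2 - 1) * weight j \<le> - (1 - \<beta> (Suc j)) * weight j"
        by (rule mult_right_mono) (rule weight_nonneg)
      then show ?thesis using potential_Suc_le[OF that] by (simp add: algebra_simps)
    qed
    show "\<exists>\<delta>>0. \<forall>j. a \<le> potential j \<longrightarrow> \<not> x j = 0 \<and> \<delta> \<le> weight j" if "0 < a" for a
      using weight_bounded_below[OF that] that by (intro exI[of _ "1 - exp (- a)"]) auto
  qed fact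
  then have "(\<lambda>j. sqrt (exp (potential j) - 1)) \<longlonglongrightarrow> sqrt (exp 0 - 1)" by (intro tendsto_intros)
  then show ?thesis unfolding norm_eq_potential by simp
qed

end

section \<open>Almost sure behaviour of the norm\<close>

lemma norm_scaleR_one_plus_power2_le:
  fixes y :: "'a::real_normed_vector" and x :: "'b::real_normed_vector"
  assumes "norm y \<le> b * norm x" "0 \<le> b"
  shows "norm (y /\<^sub>R (1 + (norm x)\<^sup>2)) \<le> b"
proof -
  have "2 * norm x \<le> (norm x)\<^sup>2 + 1"
    using zero_le_power2[of "norm x - 1"] by (simp add: power2_diff)
  then have "norm x \<le> 1 + (norm x)\<^sup>2" using norm_ge_zero[of x] by linarith
  then have "b * norm x \<le> b * (1 + (norm x)\<^sup>2)" using assms(2) by (rule mult_left_mono)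
  then have "norm y / (1 + (norm x)\<^sup>2) \<le> b"
    using assms(1) by (simp add: add_pos_nonneg pos_divide_le_eq)
  moreover have "norm (y /\<^sub>R (1 + (norm x)\<^sup>2)) = norm y / (1 + (norm x)\<^sup>2)"
    by (simp add: field_simps add_pos_nonneg)
  ultimately show ?thesis by simp
qed

lemma le_suminf_nonneg:
  fixes \<alpha> :: "nat \<Rightarrow> real"
  assumes "\<And>n. 0 \<le> \<alpha> n" "summable \<alpha>"
  shows "\<alpha> n \<le> suminf \<alpha>"
  using sum_le_suminf[OF assms(2), of "{n}"] assms(1) by simp

lemma summable_power2_one_plus_minus_one:
  fixes \<alpha> :: "nat \<Rightarrow> real"
  assumes nonneg: "\<And>n. 0 \<le> \<alpha> n" and summable: "summable \<alpha>"
  shows "summable (\<lambda>n. (1 + \<alpha> n)\<^sup>2 - 1)"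
proof -
  have "summable (\<lambda>n. \<alpha> n * \<alpha> n)"
    by (rule summable_comparison_test'[OF summable_mult[OF summable, of "suminf \<alpha>"], where N=0])
      (use nonneg le_suminf_nonneg[OF nonneg summable] in \<open>auto intro: mult_right_mono\<close>)
  then have "summable (\<lambda>n. 2 * \<alpha> n + \<alpha> n * \<alpha> n)" by (intro summable_add summable_mult summable)
  then show ?thesis by (simp add: power2_eq_square algebra_simps)
qed

context L2_adapted_process
begin

text \<open>The conditional mean is cut off where the growth bound fails, so that the normalised mean is
  uniformly bounded on all of the sample space and not only almost everywhere.\<close>

lemma AE_perturbed_recursion:
  assumes "A7 M F X" "A8 M F X"
    and \<beta>: "\<And>n. 0 \<le> \<beta> n" "\<And>n. \<beta> n \<le> B"
    and ratio: "AE \<omega> in M. \<forall>n\<ge>1. X (n - 1) \<omega> \<noteq> 0 \<longrightarrow>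
      norm (vcond_exp M (F (n - 1)) (X n) \<omega>) / norm (X (n - 1) \<omega>) \<le> \<beta> n"
  shows "AE \<omega> in M. perturbed_recursion (\<lambda>j. X j \<omega>) (\<lambda>j. vcond_exp M (F j) (X (Suc j)) \<omega>)
    (\<lambda>j. resid M F X (Suc j) \<omega>) \<beta>"
proof -
  let ?m = "\<lambda>j \<omega>. vcond_exp M (F j) (X (Suc j)) \<omega>"
  define c where "c j \<omega> = (if X j \<omega> \<noteq> 0 \<and> norm (?m j \<omega>) \<le> \<beta> (Suc j) * norm (X j \<omega>)
    then ?m j \<omega> /\<^sub>R (1 + (norm (X j \<omega>))\<^sup>2) else 0)" for j \<omega>
  have c_measurable: "c j \<in> borel_measurable (F j)" for j
  proof -
    have [measurable]: "X j \<in> borel_measurable (F j)" by (rule adapted)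
    show ?thesis unfolding c_def[abs_def] by measurable
  qed
  have c_bounded: "norm (c j \<omega>) \<le> B" for j \<omega>
    using norm_scaleR_one_plus_power2_le[of "?m j \<omega>" "\<beta> (Suc j)" "X j \<omega>"] \<beta>[of "Suc j"]
    unfolding c_def by (auto intro: order_trans)
  have mean_bound: "AE \<omega> in M. \<forall>j. X j \<omega> \<noteq> 0 \<longrightarrow> norm (?m j \<omega>) \<le> \<beta> (Suc j) * norm (X j \<omega>)"
    using ratio
  proof eventually_elim
    case (elim \<omega>)
    show ?case
      using elim[rule_format, of "Suc j" for j] by (simp add: pos_divide_le_eq)
  qed
  have mean_at_zero: "AE \<omega> in M. (\<lambda>j. if X j \<omega> = 0 then ?m j \<omega> else 0) \<longlonglongrightarrow> 0"
    using \<open>A7 M F X\<close> unfolding A7_def by eventually_elim (drule LIMSEQ_Suc, unfold diff_Suc_1)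
  show ?thesis
    using mean_bound mean_at_zero AE_summable_inner_resid[OF \<open>A8 M F X\<close> c_measurable c_bounded]
      AE_summable_norm_resid_square[OF \<open>A8 M F X\<close>]
  proof eventually_elim
    case (elim \<omega>)
    have "c j \<omega> \<bullet> resid M F X (Suc j) \<omega> = (if X j \<omega> = 0 then 0
        else (?m j \<omega> /\<^sub>R (1 + (norm (X j \<omega>))\<^sup>2)) \<bullet> resid M F X (Suc j) \<omega>)" for j
      using elim(1) by (simp add: c_def)
    then show ?case
      using elim by unfold_locales (simp_all add: resid_def)
  qed
qed

theorem AE_convergent_norm:
  assumes "A5 M F X" "A7 M F X" "A8 M F X"
  shows "AE \<omega> in M. convergent (\<lambda>n. norm (X n \<omega>))"
proof -
  obtain \<alpha> where \<alpha>: "\<And>n. 0 \<le> \<alpha> n" "summable \<alpha>" and ratio: "AE \<omega> in M. \<forall>n\<ge>1. X (n - 1) \<omega> \<noteq> 0 \<longrightarrow>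
      norm (vcond_exp M (F (n - 1)) (X n) \<omega>) / norm (X (n - 1) \<omega>) \<le> 1 + \<alpha> n"
    using assms(1) unfolding A5_def by blast
  have "max 0 ((1 + \<alpha> (Suc j))\<^sup>2 - 1) = (1 + \<alpha> (Suc j))\<^sup>2 - 1" for j
    using \<alpha>(1)[of "Suc j"] by (simp add: power2_eq_square algebra_simps)
  then have excess: "summable (\<lambda>j. max 0 ((1 + \<alpha> (Suc j))\<^sup>2 - 1))"
    using summable_power2_one_plus_minus_one[OF \<alpha>] by (simp add: summable_Suc_iff[of "\<lambda>j. (1 + \<alpha> j)\<^sup>2 - 1"])
  have "AE \<omega> in M. perturbed_recursion (\<lambda>j. X j \<omega>) (\<lambda>j. vcond_exp M (F j) (X (Suc j)) \<omega>)
      (\<lambda>j. resid M F X (Suc j) \<omega>) (\<lambda>n. 1 + \<alpha> n)"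
    using assms \<alpha> le_suminf_nonneg[OF \<alpha>]
    by (intro AE_perturbed_recursion[OF _ _ _ _ ratio, where B="1 + suminf \<alpha>"]) auto
  then show ?thesis
    by eventually_elim (rule perturbed_recursion.convergent_norm[OF _ excess])
qed

theorem AE_norm_tendsto_0:
  assumes "A6 M F X" "A7 M F X" "A8 M F X"
  shows "AE \<omega> in M. (\<lambda>n. norm (X n \<omega>)) \<longlonglongrightarrow> 0"
proof -
  obtain k where k: "\<And>n. 0 < k n \<and> k n \<le> 1" and not_summable: "\<not> summable (\<lambda>n. 1 - k n)"
    and ratio: "AE \<omega> in M. \<forall>n\<ge>1. X (n - 1) \<omega> \<noteq> 0 \<longrightarrow>
      norm (vcond_exp M (F (n - 1)) (X n) \<omega>) / norm (X (n - 1) \<omega>) \<le> k n"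
    using assms(1) unfolding A6_def by blast
  have not_summable': "\<not> summable (\<lambda>j. 1 - k (Suc j))" using not_summable summable_Suc_iff by blast
  have k': "0 \<le> k n" "k n \<le> 1" for n using k[of n] by auto
  have "AE \<omega> in M. perturbed_recursion (\<lambda>j. X j \<omega>) (\<lambda>j. vcond_exp M (F j) (X (Suc j)) \<omega>)
      (\<lambda>j. resid M F X (Suc j) \<omega>) k"
    using assms k' by (intro AE_perturbed_recursion[OF _ _ _ _ ratio, where B=1]) auto
  then show ?thesis
    by eventually_elim (rule perturbed_recursion.norm_tendsto_0[OF _ k' not_summable'])
qed

end

theorem theorem6:
  fixes M :: "'a measure" and F :: "nat \<Rightarrow> 'a measure" and X :: "nat \<Rightarrow> 'a \<Rightarrow> real ^ 'p"
  assumes "prob_space M"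
    and "\<And>n. subalgebra M (F n)"
    and "\<And>m n. m \<le> n \<Longrightarrow> sets (F m) \<subseteq> sets (F n)"
    and "\<And>n. X n \<in> borel_measurable (F n)"
    and "\<And>n. integrable M (\<lambda>\<omega>. (norm (X n \<omega>))\<^sup>2)"
  shows "(A5 M F X \<and> A7 M F X \<and> A8 M F X \<longrightarrow> (AE \<omega> in M. convergent (\<lambda>n. norm (X n \<omega>))))
       \<and> (A6 M F X \<and> A7 M F X \<and> A8 M F X \<longrightarrow> (AE \<omega> in M. (\<lambda>n. norm (X n \<omega>)) \<longlonglongrightarrow> 0))"
proof -
  interpret L2_adapted_process M F X
    using assms by (simp add: L2_adapted_process_def L2_adapted_process_axioms_def
        filtered_prob_space_def filtered_prob_space_axioms_def)
  show ?thesis using AE_convergent_norm AE_norm_tendsto_0 by blast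
qed

end
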